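(* Let $A$, $B$ and $C$ be distinct (axis-parallel) rectangular regions in the plane. Assume $B$ shares an edge with $A$ and shares an edge with $C$, but $A$ and $C$ are disjoint except possibly in a single point. Let $S_A$, $S_B$, $S_C$ be finite sets of points in $A$, $B$ and $C$ respectively. Let $x_A$ and $x_C$ be the points of $S_B$ closest to $A$ and to $C$ respectively, and assume $x_A \neq x_C$. Let $P$ be a noncrossing Hamiltonian path through $S_B$ with endpoints $x_A$ and $x_C$. Let $P'$ be a path obtained from $P$ by adding an edge from $x_A$ to any point of $S_A$ and an edge from $x_C$ to any point of $S_C$. Then $P'$ is noncrossing.
   Context: Edges are straight line segments between points: for an edge $e=\{a,b\}$, $L(e)$ is the closed segment from $a$ to $b$. A path (set of edges) is noncrossing if no two of its edges have intersecting line segments (other than at a shared endpoint). The distance from a point $x$ to a set $R$ is $d(x,R)=\min_{y\in R} d(x,y)$ with $d$ the Euclidean distance; the point of $S_B$ closest to $A$ is the one minimizing $d(\cdot, A)$. *)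

theory Defs
  imports "HOL-Analysis.Analysis"
begin

type_synonym pt = "real \<times> real"

definition rectangle :: "pt set \<Rightarrow> bool" where
  "rectangle R \<longleftrightarrow> (\<exists>a1 b1 a2 b2. a1 < b1 \<and> a2 < b2 \<and> R = {a1..b1} \<times> {a2..b2})"

definition side_of :: "pt set \<Rightarrow> pt set \<Rightarrow> bool" where
  "side_of s R \<longleftrightarrow> (\<exists>a1 b1 a2 b2. a1 < b1 \<and> a2 < b2 \<and> R = {a1..b1} \<times> {a2..b2} \<and>
      (s = {a1} \<times> {a2..b2} \<or> s = {b1} \<times> {a2..b2} \<or>
       s = {a1..b1} \<times> {a2} \<or> s = {a1..b1} \<times> {b2}))"

definition shares_edge :: "pt set \<Rightarrow> pt set \<Rightarrow> bool" where
  "shares_edge R Q \<longleftrightarrow> interior R \<inter> interior Q = {} \<and> (\<exists>s. side_of s R \<and> side_of s Q)"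

definition L :: "pt set \<Rightarrow> pt set" where
  "L e = convex hull e"

definition noncrossing :: "pt set set \<Rightarrow> bool" where
  "noncrossing E \<longleftrightarrow> (\<forall>e\<in>E. \<forall>f\<in>E. e \<noteq> f \<longrightarrow> L e \<inter> L f \<subseteq> e \<inter> f)"

definition path_edges :: "pt list \<Rightarrow> pt set set" where
  "path_edges ps = {{ps ! i, ps ! Suc i} | i. Suc i < length ps}"

definition closest_point :: "pt \<Rightarrow> pt set \<Rightarrow> pt set \<Rightarrow> bool" where
  "closest_point x S R \<longleftrightarrow> x \<in> S \<and> (\<forall>y\<in>S. y \<noteq> x \<longrightarrow> infdist x R < infdist y R)"

end

theory Submission
  imports Defs
begin

text \<open>Let n be the outward normal of the side that B shares with A. For points of B the distance
  to A is the gap to that side, so xA is the unique maximiser of the linear functional n \<bullet> _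
  on SB, while all of A lies where n \<bullet> _ is at least its value at xA. Hence the new edge from xA
  stays in a closed half-plane that meets every edge of P at most in xA, and likewise for xC.
  For the two new edges, let X and Y be the gaps to the sides shared with A and with C, which
  differ as A and C meet in at most one point: both gaps are nonnegative on B, X \<le> 0 \<le> Y on A
  and Y \<le> 0 \<le> X on C. A positive combination of Y and -X that is positive at xA and negative
  at xC then gives a line separating the two edges up to a common endpoint sA = sC.\<close>

lemma closed_segment_endpoint_if_inner_ge:
  fixes v p q z :: "'a::real_inner"
  assumes "z \<in> closed_segment p q" "v \<bullet> p < c" "v \<bullet> q \<le> c" "c \<le> v \<bullet> z"
  shows "z = q"
proof -
  obtain u where u: "0 \<le> u" "u \<le> 1" "z = (1 - u) *\<^sub>R p + u *\<^sub>R q"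
    using assms(1) by (auto simp: in_segment)
  have "v \<bullet> z = (1 - u) * (v \<bullet> p) + u * (v \<bullet> q)"
    by (simp add: u(3) inner_add_right)
  moreover have "u * (v \<bullet> q) \<le> u * c"
    using assms(3) u(1) by (rule mult_left_mono)
  ultimately have "(1 - u) * (c - v \<bullet> p) \<le> 0"
    using assms(4) by (simp add: algebra_simps)
  then have "u = 1"
    using assms(2) u(2) by (simp add: mult_le_0_iff)
  then show ?thesis
    using u(3) by simp
qed

lemma inner_ge_on_closed_segment:
  fixes v p q z :: "'a::real_inner"
  assumes "z \<in> closed_segment p q" "c \<le> v \<bullet> p" "c \<le> v \<bullet> q"
  shows "c \<le> v \<bullet> z"
  using closed_segment_subset[OF _ _ convex_halfspace_ge[of c v], of p q] assms by auto

lemma closed_segment_Int_subset_if_unique_max: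
  fixes v x s p q :: "'a::real_inner"
  assumes max: "\<forall>y\<in>S. y \<noteq> x \<longrightarrow> v \<bullet> y < v \<bullet> x"
    and "v \<bullet> x \<le> v \<bullet> s" "p \<in> S" "q \<in> S"
  shows "closed_segment x s \<inter> closed_segment p q \<subseteq> {x} \<inter> {p, q}"
proof
  fix z assume z: "z \<in> closed_segment x s \<inter> closed_segment p q"
  then have ge: "v \<bullet> x \<le> v \<bullet> z"
    using inner_ge_on_closed_segment assms(2) by blast
  have "v \<bullet> p \<le> v \<bullet> x" "v \<bullet> q \<le> v \<bullet> x"
    using max assms(3,4) by force+
  then have "p \<noteq> x \<Longrightarrow> z = q" "q \<noteq> x \<Longrightarrow> z = p"
    using closed_segment_endpoint_if_inner_ge[of z p q v "v \<bullet> x"]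
      closed_segment_endpoint_if_inner_ge[of z q p v "v \<bullet> x"]
      max assms(3,4) z ge by (auto simp: closed_segment_commute)
  then show "z \<in> {x} \<inter> {p, q}"
    using z ge max assms(3) by (cases "p = x"; cases "q = x") force+
qed

lemma closed_segment_Int_subset_if_hyperplane_separates:
  fixes v a a' b b' :: "'a::real_inner"
  assumes "c < v \<bullet> a" "c \<le> v \<bullet> a'" "v \<bullet> b < c" "v \<bullet> b' \<le> c"
  shows "closed_segment a a' \<inter> closed_segment b b' \<subseteq> {a'} \<inter> {b'}"
proof
  fix z assume z: "z \<in> closed_segment a a' \<inter> closed_segment b b'"
  then have "c \<le> v \<bullet> z" "- c \<le> (- v) \<bullet> z"
    using inner_ge_on_closed_segment[of z a a' c v] inner_ge_on_closed_segment[of z b b' "- c" "- v"]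
      assms by auto
  then show "z \<in> {a'} \<inter> {b'}"
    using closed_segment_endpoint_if_inner_ge[of z a a' "- v" "- c"]
      closed_segment_endpoint_if_inner_ge[of z b b' v c] z assms by auto
qed

lemma L_doubleton: "L {a, b} = closed_segment a b"
  by (simp add: L_def segment_convex_hull)

lemma noncrossing_insert:
  assumes "noncrossing E" "\<And>f. f \<in> E \<Longrightarrow> f \<noteq> e \<Longrightarrow> L e \<inter> L f \<subseteq> e \<inter> f"
  shows "noncrossing (insert e E)"
  using assms unfolding noncrossing_def by (metis Int_commute insert_iff)

lemma path_edgesE:
  assumes "f \<in> path_edges ps"
  obtains p q where "f = {p, q}" "p \<in> set ps" "q \<in> set ps"
  using assms unfolding path_edges_def by (blast intro: nth_mem Suc_lessD)

lemma side_of_box_iff: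
  assumes "a1 < b1" "a2 < b2"
  shows "side_of s ({a1..b1} \<times> {a2..b2}) \<longleftrightarrow>
    s = {a1} \<times> {a2..b2} \<or> s = {b1} \<times> {a2..b2} \<or> s = {a1..b1} \<times> {a2} \<or> s = {a1..b1} \<times> {b2}"
  using assms unfolding side_of_def by (auto simp: times_eq_iff)

datatype side = Left | Right | Bottom | Top

fun normal :: "side \<Rightarrow> pt" where
  "normal Left = (-1, 0)"
| "normal Right = (1, 0)"
| "normal Bottom = (0, -1)"
| "normal Top = (0, 1)"

lemma norm_normal [simp]: "norm (normal s) = 1"
  by (cases s) auto

locale axis_box =
  fixes a1 b1 a2 b2 :: real
  assumes a1_less_b1: "a1 < b1" and a2_less_b2: "a2 < b2"
begin

fun gap :: "side \<Rightarrow> pt \<Rightarrow> real" where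
  "gap Left p = fst p - a1"
| "gap Right p = b1 - fst p"
| "gap Bottom p = snd p - a2"
| "gap Top p = b2 - snd p"

fun attached :: "side \<Rightarrow> pt set \<Rightarrow> bool" where
  "attached Left A \<longleftrightarrow> (\<exists>a<a1. A = {a..a1} \<times> {a2..b2})"
| "attached Right A \<longleftrightarrow> (\<exists>b>b1. A = {b1..b} \<times> {a2..b2})"
| "attached Bottom A \<longleftrightarrow> (\<exists>a<a2. A = {a1..b1} \<times> {a..a2})"
| "attached Top A \<longleftrightarrow> (\<exists>b>b2. A = {a1..b1} \<times> {b2..b})"

lemma gap_eq_inner: "gap s p = gap s 0 - normal s \<bullet> p"
  by (cases s) (auto simp: inner_prod_def)

lemma gap_nonneg: "p \<in> {a1..b1} \<times> {a2..b2} \<Longrightarrow> 0 \<le> gap s p"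
  by (cases s) auto

lemma attached_gap_nonpos: "attached s A \<Longrightarrow> p \<in> A \<Longrightarrow> gap s p \<le> 0"
  by (cases s) auto

lemma attached_gap_other_nonneg: "attached s A \<Longrightarrow> p \<in> A \<Longrightarrow> t \<noteq> s \<Longrightarrow> 0 \<le> gap t p"
  using a1_less_b1 a2_less_b2 by (cases s; cases t) auto

lemma attached_projection:
  "attached s A \<Longrightarrow> p \<in> {a1..b1} \<times> {a2..b2} \<Longrightarrow> p + gap s p *\<^sub>R normal s \<in> A"
  by (cases s; cases p) auto

lemma attached_infdist:
  assumes "attached s A" "p \<in> {a1..b1} \<times> {a2..b2}"
  shows "infdist p A = gap s p"
proof (rule antisym)
  have "dist p (p + gap s p *\<^sub>R normal s) = gap s p"
    using gap_nonneg[OF assms(2)] by (simp add: dist_norm)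
  then show "infdist p A \<le> gap s p"
    using infdist_le[OF attached_projection[OF assms], of p] by simp
  have "gap s p \<le> dist p a" if "a \<in> A" for a
  proof -
    have "gap s p \<le> normal s \<bullet> (a - p)"
      using attached_gap_nonpos[OF assms(1) that] gap_eq_inner[of s a] gap_eq_inner[of s p]
      by (simp add: inner_diff_right)
    also have "\<dots> \<le> dist p a"
      using norm_cauchy_schwarz[of "normal s" "a - p"] by (simp add: dist_norm norm_minus_commute)
    finally show ?thesis .
  qed
  moreover have "A \<noteq> {}"
    using attached_projection[OF assms] by auto
  ultimately show "gap s p \<le> infdist p A"
    by (simp add: infdist_notempty cINF_greatest)
qed

lemma attached_same_side_not_subset_singleton:
  assumes "attached s A" "attached s C"
  shows "\<not> A \<inter> C \<subseteq> {p}"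
proof (cases s)
  case Left
  then have "(a1, a2) \<in> A \<inter> C" "(a1, b2) \<in> A \<inter> C"
    using assms a2_less_b2 by auto
  then show ?thesis using a2_less_b2 by auto
next
  case Right
  then have "(b1, a2) \<in> A \<inter> C" "(b1, b2) \<in> A \<inter> C"
    using assms a2_less_b2 by auto
  then show ?thesis using a2_less_b2 by auto
next
  case Bottom
  then have "(a1, a2) \<in> A \<inter> C" "(b1, a2) \<in> A \<inter> C"
    using assms a1_less_b1 by auto
  then show ?thesis using a1_less_b1 by auto
next
  case Top
  then have "(a1, b2) \<in> A \<inter> C" "(b1, b2) \<in> A \<inter> C"
    using assms a1_less_b1 by auto
  then show ?thesis using a1_less_b1 by auto
qed

lemma shares_edge_attached:
  assumes "rectangle A" "shares_edge ({a1..b1} \<times> {a2..b2}) A"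
  shows "\<exists>s. attached s A"
proof (rule ccontr)
  assume none: "\<nexists>s. attached s A"
  obtain c1 d1 c2 d2 where A: "c1 < d1" "c2 < d2" "A = {c1..d1} \<times> {c2..d2}"
    using assms(1) unfolding rectangle_def by auto
  obtain e where "side_of e ({a1..b1} \<times> {a2..b2})" "side_of e A"
    and disjoint: "interior ({a1..b1} \<times> {a2..b2}) \<inter> interior A = {}"
    using assms(2) unfolding shares_edge_def by auto
  then have eB: "e = {a1} \<times> {a2..b2} \<or> e = {b1} \<times> {a2..b2} \<or> e = {a1..b1} \<times> {a2} \<or> e = {a1..b1} \<times> {b2}"
    and eA: "e = {c1} \<times> {c2..d2} \<or> e = {d1} \<times> {c2..d2} \<or> e = {c1..d1} \<times> {c2} \<or> e = {c1..d1} \<times> {d2}"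
    using side_of_box_iff a1_less_b1 a2_less_b2 A by auto
  have no_overlap: "\<not> (max a1 c1 < min b1 d1 \<and> max a2 c2 < min b2 d2)"
  proof
    assume "max a1 c1 < min b1 d1 \<and> max a2 c2 < min b2 d2"
    then have "((max a1 c1 + min b1 d1) / 2, (max a2 c2 + min b2 d2) / 2)
        \<in> interior ({a1..b1} \<times> {a2..b2}) \<inter> interior A"
      unfolding A(3) interior_Times by auto
    then show False
      using disjoint by blast
  qed
  have "\<not> attached s A" for s
    using none by blast
  from this[of Left] this[of Right] this[of Bottom] this[of Top] eB eA show False
    using no_overlap a1_less_b1 a2_less_b2 A by (elim disjE) (simp_all add: times_eq_iff)
qed

lemma closest_point_gap_less:
  assumes "attached s A" "S \<subseteq> {a1..b1} \<times> {a2..b2}" "closest_point x S A" "y \<in> S" "y \<noteq> x"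
  shows "gap s x < gap s y"
proof -
  have "infdist x A < infdist y A"
    using assms(3-5) unfolding closest_point_def by blast
  moreover have "x \<in> S"
    using assms(3) unfolding closest_point_def by blast
  ultimately show ?thesis
    using attached_infdist[OF assms(1)] assms(2,4) by (metis subsetD)
qed

lemma connecting_edge_noncrossing:
  assumes "attached s A" "S \<subseteq> {a1..b1} \<times> {a2..b2}" "closest_point x S A"
    and "a \<in> A" "p \<in> S" "q \<in> S"
  shows "L {x, a} \<inter> L {p, q} \<subseteq> {x, a} \<inter> {p, q}"
proof -
  have "normal s \<bullet> y < normal s \<bullet> x" if "y \<in> S" "y \<noteq> x" for y
    using closest_point_gap_less[OF assms(1-3) that] gap_eq_inner[of s x] gap_eq_inner[of s y]
    by linarith
  moreover have "x \<in> S"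
    using assms(3) unfolding closest_point_def by simp
  then have "0 \<le> gap s x"
    using gap_nonneg assms(2) by blast
  then have "gap s a \<le> gap s x"
    using attached_gap_nonpos[OF assms(1,4)] by linarith
  then have "normal s \<bullet> x \<le> normal s \<bullet> a"
    using gap_eq_inner[of s x] gap_eq_inner[of s a] by linarith
  ultimately show ?thesis
    using closed_segment_Int_subset_if_unique_max[OF _ _ assms(5,6)] unfolding L_doubleton by blast
qed

lemma connecting_edges_noncrossing:
  assumes "attached sa A" "attached sc C" "sa \<noteq> sc" "S \<subseteq> {a1..b1} \<times> {a2..b2}"
    and "closest_point xA S A" "closest_point xC S C" "xA \<noteq> xC" "a \<in> A" "c \<in> C"
  shows "L {xA, a} \<inter> L {xC, c} \<subseteq> {xA, a} \<inter> {xC, c}"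
proof -
  let ?X = "gap sa" and ?Y = "gap sc"
  have "xA \<in> S" "xC \<in> S"
    using assms(5,6) unfolding closest_point_def by simp_all
  then have X: "0 \<le> ?X xA" "?X xA < ?X xC" "?X a \<le> 0" "0 \<le> ?X c"
    using gap_nonneg assms(4) closest_point_gap_less[OF assms(1,4,5) _ assms(7)[symmetric]]
      attached_gap_nonpos[OF assms(1,8)] attached_gap_other_nonneg[OF assms(2,9) assms(3)]
    by auto
  have Y: "0 \<le> ?Y xC" "?Y xC < ?Y xA" "?Y c \<le> 0" "0 \<le> ?Y a"
    using \<open>xA \<in> S\<close> \<open>xC \<in> S\<close> gap_nonneg assms(4) closest_point_gap_less[OF assms(2,4,6) _ assms(7)]
      attached_gap_nonpos[OF assms(2,9)] attached_gap_other_nonneg[OF assms(1,8) assms(3)[symmetric]]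
    by auto
  txt \<open>g vanishes on a line through the corner common to both sides (or parallel to them if they
    are opposite); the weights \<alpha>, \<beta> put xA and xC strictly on opposite sides of it.\<close>
  define \<alpha> where "\<alpha> = ?X xA + ?X xC"
  define \<beta> where "\<beta> = ?Y xA + ?Y xC"
  define g where "g p = \<alpha> * ?Y p - \<beta> * ?X p" for p
  define v where "v = \<beta> *\<^sub>R normal sa - \<alpha> *\<^sub>R normal sc"
  have v: "v \<bullet> p = g p - g 0" for p
    unfolding v_def g_def gap_eq_inner[of sa p] gap_eq_inner[of sc p]
    by (simp add: inner_diff_left algebra_simps)
  have "g xA = (?X xC - ?X xA) * ?Y xA + ?X xA * (?Y xA - ?Y xC)"
    unfolding g_def \<alpha>_def \<beta>_def by (simp add: algebra_simps)
  then have "0 < g xA"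
    using X Y by (smt (verit) mult_nonneg_nonneg mult_pos_pos)
  have "g xC = - ((?Y xA - ?Y xC) * ?X xC + ?Y xC * (?X xC - ?X xA))"
    unfolding g_def \<alpha>_def \<beta>_def by (simp add: algebra_simps)
  then have "g xC < 0"
    using X Y by (smt (verit) mult_nonneg_nonneg mult_pos_pos)
  have "0 \<le> g a" "g c \<le> 0"
    unfolding g_def \<alpha>_def \<beta>_def using X Y
    by (smt (verit) mult_nonneg_nonneg mult_nonneg_nonpos)+
  then have "closed_segment xA a \<inter> closed_segment xC c \<subseteq> {a} \<inter> {c}"
    using \<open>0 < g xA\<close> \<open>g xC < 0\<close>
    by (intro closed_segment_Int_subset_if_hyperplane_separates[where v = v and c = "- g 0"]) (auto simp: v)
  then show ?thesis
    unfolding L_doubleton by blast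
qed

end

theorem lemma3:
  fixes A B C :: "pt set" and SA SB SC :: "pt set" and xA xC sA sC :: pt and ps :: "pt list"
  assumes "rectangle A" and "rectangle B" and "rectangle C"
    and "A \<noteq> B" and "B \<noteq> C" and "A \<noteq> C"
    and "shares_edge B A" and "shares_edge B C"
    and "\<exists>p. A \<inter> C \<subseteq> {p}"
    and "finite SA" and "finite SB" and "finite SC"
    and "SA \<subseteq> A" and "SB \<subseteq> B" and "SC \<subseteq> C"
    and "closest_point xA SB A" and "closest_point xC SB C"
    and "xA \<noteq> xC"
    and "distinct ps" and "set ps = SB" and "hd ps = xA" and "last ps = xC"
    and "noncrossing (path_edges ps)"
    and "sA \<in> SA" and "sC \<in> SC"
  shows "noncrossing (path_edges ps \<union> {{xA, sA}, {xC, sC}})"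
proof -
  obtain a1 b1 a2 b2 where "a1 < b1" "a2 < b2" and B: "B = {a1..b1} \<times> {a2..b2}"
    using \<open>rectangle B\<close> unfolding rectangle_def by blast
  then interpret axis_box a1 b1 a2 b2
    by unfold_locales
  obtain sa sc where sa: "attached sa A" and sc: "attached sc C"
    using shares_edge_attached \<open>rectangle A\<close> \<open>rectangle C\<close> assms(7,8) B by blast
  have "sa \<noteq> sc"
    using attached_same_side_not_subset_singleton sa sc assms(9) by blast
  have SB: "SB \<subseteq> {a1..b1} \<times> {a2..b2}"
    using assms(14) B by simp
  have "sA \<in> A" "sC \<in> C"
    using assms(13,15,24,25) by auto
  have "L {xA, sA} \<inter> L f \<subseteq> {xA, sA} \<inter> f" "L {xC, sC} \<inter> L f \<subseteq> {xC, sC} \<inter> f"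
    if "f \<in> path_edges ps" for f
    using that \<open>set ps = SB\<close>
      connecting_edge_noncrossing[OF sa SB \<open>closest_point xA SB A\<close> \<open>sA \<in> A\<close>]
      connecting_edge_noncrossing[OF sc SB \<open>closest_point xC SB C\<close> \<open>sC \<in> C\<close>]
    by (metis path_edgesE)+
  moreover have "L {xA, sA} \<inter> L {xC, sC} \<subseteq> {xA, sA} \<inter> {xC, sC}"
    using connecting_edges_noncrossing[OF sa sc \<open>sa \<noteq> sc\<close> SB] assms(16-18) \<open>sA \<in> A\<close> \<open>sC \<in> C\<close> .
  ultimately have "noncrossing (insert {xA, sA} (insert {xC, sC} (path_edges ps)))"
    using \<open>noncrossing (path_edges ps)\<close> by (intro noncrossing_insert) (auto simp: Int_commute)
  then show ?thesis
    by (simp add: insert_commute)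
qed

end
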